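(* Let $(x_n)_{n\ge1}$ be a monotone increasing sequence of positive integers such that for some $r>0$ and all $N$, $$E_N:=\#\{(a,b,c,d)\in[1,N]^4 : x_a+x_b=x_c+x_d\}\ge rN^3.$$ Then there exist increasing sequences of positive integers $(n_k)_{k\ge1}$ and $(a_N)_{N\ge1}$ with $n_k\to\infty$, $a_N\to\infty$, such that $(n_k)$ has density bounded from below in $\{1,\dots,a_N\}$ (i.e. there is $c>0$ with $\#\{k : n_k\le a_N\}\ge c\,a_N$ for all $N$), and for every $\varepsilon>0$ and almost every $\alpha\in\mathbb{R}$, $$\min\big\{\|\alpha x_{n_k}-\alpha x_{n_l}\| : k\ne l,\ n_k,n_l\le a_N\big\}\gg\frac{1}{a_N(\log a_N)^{1+\varepsilon}},$$ where the implied constant may depend on $\alpha$ and $\varepsilon$.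
   Context: For $x\in\mathbb{R}$, $\|x\|=\min_{k\in\mathbb{Z}}|x-k|$ is the distance to the nearest integer. The left-hand side of the conclusion is the minimal gap modulo 1 among the points $\alpha x_{n_k}$ with $n_k\le a_N$ (written $\delta_{\min}^{\alpha}(x_{n_k},a_N)$ in the paper). *)

theory Defs
  imports "HOL-Analysis.Analysis"
begin

definition dist_nearest_int :: "real \<Rightarrow> real" where
  "dist_nearest_int x = (INF k::int. \<bar>x - real_of_int k\<bar>)"

definition add_energy :: "(nat \<Rightarrow> nat) \<Rightarrow> nat \<Rightarrow> nat" where
  "add_energy x N = card {(a, b, c, d). a \<in> {1..N} \<and> b \<in> {1..N} \<and> c \<in> {1..N} \<and> d \<in> {1..N}
                                        \<and> x a + x b = x c + x d}"

definition delta_min :: "real \<Rightarrow> (nat \<Rightarrow> nat) \<Rightarrow> (nat \<Rightarrow> nat) \<Rightarrow> nat \<Rightarrow> real" where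
  "delta_min \<alpha> x n A = Min {dist_nearest_int (\<alpha> * real (x (n k)) - \<alpha> * real (x (n l))) | k l.
                             1 \<le> k \<and> 1 \<le> l \<and> k \<noteq> l \<and> n k \<le> A \<and> n l \<le> A}"

end

theory Submission
  imports Defs "HOL-Library.Infinite_Set"
begin

definition diff_set :: "'a::ab_group_add set \<Rightarrow> 'a set" where
  "diff_set V = (\<lambda>(a, b). a - b) ` (V \<times> V)"

definition diff_reps :: "'a::ab_group_add set \<Rightarrow> 'a \<Rightarrow> ('a \<times> 'a) set" where
  "diff_reps V p = {(a, b) \<in> V \<times> V. a - b = p}"

definition additive_quadruples :: "'a::plus set \<Rightarrow> ('a \<times> 'a \<times> 'a \<times> 'a) set" where
  "additive_quadruples V = {(a, b, c, d) \<in> V \<times> V \<times> V \<times> V. a + b = c + d}"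

definition popular_diffs :: "real \<Rightarrow> 'a::ab_group_add set \<Rightarrow> 'a set" where
  "popular_diffs \<eta> V = {p \<in> diff_set V. \<eta> * card V / 2 \<le> card (diff_reps V p)}"

lemma finite_diff_set [simp]: "finite V \<Longrightarrow> finite (diff_set V)"
  by (simp add: diff_set_def)

lemma finite_diff_reps [simp]: "finite V \<Longrightarrow> finite (diff_reps V p)"
  by (rule finite_subset[of _ "V \<times> V"]) (auto simp: diff_reps_def)

lemma card_diff_reps_le: "finite V \<Longrightarrow> card (diff_reps V p) \<le> card V"
  by (rule card_inj_on_le[where f = fst]) (auto simp: diff_reps_def inj_on_def)

lemma sum_card_diff_reps:
  assumes "finite V"
  shows "(\<Sum>p\<in>diff_set V. card (diff_reps V p)) = card V ^ 2"
proof -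
  have "V \<times> V = (\<Union>p\<in>diff_set V. diff_reps V p)"
    by (auto simp: diff_set_def diff_reps_def)
  also have "card \<dots> = (\<Sum>p\<in>diff_set V. card (diff_reps V p))"
    by (rule card_UN_disjoint) (use assms in \<open>simp_all, auto simp: diff_reps_def\<close>)
  finally show ?thesis
    by (simp add: card_cartesian_product power2_eq_square)
qed

lemma card_popular_diffs_le:
  assumes "finite V" "V \<noteq> {}" "\<eta> > 0"
  shows "card (popular_diffs \<eta> V) \<le> 2 * card V / \<eta>"
proof -
  define P where "P = popular_diffs \<eta> V"
  define m where "m = real (card V)"
  have "card P * (\<eta> * m / 2) \<le> (\<Sum>p\<in>P. real (card (diff_reps V p)))"
    using sum_bounded_below[of P "\<eta> * m / 2"] by (auto simp: P_def m_def popular_diffs_def)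
  also have "\<dots> \<le> (\<Sum>p\<in>diff_set V. real (card (diff_reps V p)))"
    using assms(1) by (intro sum_mono2) (auto simp: P_def popular_diffs_def)
  also have "\<dots> = m * m"
    using sum_card_diff_reps[OF assms(1)] by (metis m_def of_nat_power of_nat_sum power2_eq_square)
  finally have "(card P * \<eta>) * m \<le> (2 * m) * m"
    by argo
  moreover have "m > 0"
    using assms by (simp add: m_def card_gt_0_iff)
  ultimately have "card P * \<eta> \<le> 2 * m"
    by simp
  then show ?thesis
    using assms(3) by (simp add: P_def m_def pos_le_divide_eq)
qed

lemma card_additive_quadruples_le:
  assumes "finite V"
  shows "card (additive_quadruples V) \<le> (\<Sum>(a, c)\<in>V \<times> V. card (diff_reps V (a - c)))"
proof -
  let ?T = "SIGMA (a, c):V \<times> V. diff_reps V (a - c)"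
  have fin: "finite ?T"
    using assms by auto
  have "additive_quadruples V \<subseteq> (\<lambda>((a, c), (d, b)). (a, b, c, d)) ` ?T"
  proof
    fix q assume "q \<in> additive_quadruples V"
    then obtain a b c d where "q = (a, b, c, d)" "a \<in> V" "b \<in> V" "c \<in> V" "d \<in> V" "a + b = c + d"
      by (auto simp: additive_quadruples_def)
    moreover from \<open>a + b = c + d\<close> have "a - c = d - b"
      by (metis add_diff_cancel_left' diff_diff_eq2 add.commute)
    ultimately have "((a, c), (d, b)) \<in> ?T" and "q = (\<lambda>((a, c), (d, b)). (a, b, c, d)) ((a, c), (d, b))"
      by (simp_all add: diff_reps_def)
    then show "q \<in> (\<lambda>((a, c), (d, b)). (a, b, c, d)) ` ?T"
      by (rule rev_image_eqI)
  qed
  then have "card (additive_quadruples V) \<le> card ((\<lambda>((a, c), (d, b)). (a, b, c, d)) ` ?T)"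
    using fin by (intro card_mono) auto
  also have "\<dots> \<le> card ?T"
    using fin by (rule card_image_le)
  also have "\<dots> = (\<Sum>(a, c)\<in>V \<times> V. card (diff_reps V (a - c)))"
    using assms by (simp add: case_prod_unfold)
  finally show ?thesis .
qed

lemma card_pairs_with_popular_diff_ge:
  fixes V :: "'a::ab_group_add set" and \<eta> :: real
  assumes fin: "finite V" and \<eta>: "\<eta> > 0" and energy: "\<eta> * card V ^ 3 \<le> card (additive_quadruples V)"
  shows "\<eta> * card V ^ 2 / 2 \<le> card {(a, b) \<in> V \<times> V. a - b \<in> popular_diffs \<eta> V}"
proof (cases "V = {}")
  case False
  define m where "m = real (card V)"
  define G where "G = {(a, b) \<in> V \<times> V. a - b \<in> popular_diffs \<eta> V}"
  define f where "f q = real (card (diff_reps V (fst q - snd q)))" for q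
  have m: "m > 0"
    using fin False by (simp add: m_def card_gt_0_iff)
  have GV: "G \<subseteq> V \<times> V"
    by (auto simp: G_def)
  have "\<eta> * m ^ 3 \<le> (\<Sum>q\<in>V \<times> V. f q)"
    using energy card_additive_quadruples_le[OF fin] unfolding m_def f_def case_prod_unfold
    by (simp add: of_nat_sum[symmetric] del: of_nat_sum)
  also have "\<dots> = (\<Sum>q\<in>G. f q) + (\<Sum>q\<in>V \<times> V - G. f q)"
    using fin GV by (simp add: sum.subset_diff)
  also have "(\<Sum>q\<in>G. f q) \<le> card G * m"
    using sum_bounded_above[of G f m] card_diff_reps_le[OF fin] by (simp add: f_def m_def)
  also have "(\<Sum>q\<in>V \<times> V - G. f q) \<le> card (V \<times> V - G) * (\<eta> * m / 2)"
  proof (intro sum_bounded_above)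
    fix q assume "q \<in> V \<times> V - G"
    then show "f q \<le> \<eta> * m / 2"
      by (auto simp: G_def f_def m_def popular_diffs_def diff_set_def)
  qed
  also have "card (V \<times> V - G) * (\<eta> * m / 2) \<le> m\<^sup>2 * (\<eta> * m / 2)"
  proof -
    have "card (V \<times> V - G) \<le> card (V \<times> V)"
      using fin by (intro card_mono) auto
    then have "real (card (V \<times> V - G)) \<le> m\<^sup>2"
      by (simp add: m_def card_cartesian_product power2_eq_square flip: of_nat_mult)
    then show ?thesis
      using \<eta> m by (intro mult_right_mono) auto
  qed
  finally have "(\<eta> * m\<^sup>2 / 2) * m \<le> card G * m"
    by (simp add: power2_eq_square power3_eq_cube algebra_simps)
  then show ?thesis
    using m by (simp add: G_def m_def)
qed simp


lemma card_eq_sum_card_converse_Image: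
  assumes "finite V" and "G \<subseteq> V \<times> V"
  shows "card G = (\<Sum>b\<in>V. card (G\<inverse> `` {b}))"
proof -
  have "G = (\<lambda>(b, a). (a, b)) ` (SIGMA b:V. G\<inverse> `` {b})"
    using assms(2) by force
  also have "card \<dots> = card (SIGMA b:V. G\<inverse> `` {b})"
    by (rule card_image) (auto simp: inj_on_def)
  also have "\<dots> = (\<Sum>b\<in>V. card (G\<inverse> `` {b}))"
    using assms by (intro card_SigmaI) (auto intro: finite_subset[of _ V])
  finally show ?thesis .
qed

lemma sum_card_pairs_in_converse_Image:
  assumes "finite V" and "G \<subseteq> V \<times> V" and "R \<subseteq> V \<times> V"
  shows "(\<Sum>b\<in>V. card (R \<inter> G\<inverse> `` {b} \<times> G\<inverse> `` {b})) = (\<Sum>(a, a')\<in>R. card (G `` {a} \<inter> G `` {a'}))"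
proof -
  have finR: "finite R"
    using assms finite_subset by blast
  have "R \<inter> G\<inverse> `` {b} \<times> G\<inverse> `` {b} = R \<inter> {q. (fst q, b) \<in> G \<and> (snd q, b) \<in> G}" for b
    by auto
  then have "(\<Sum>b\<in>V. card (R \<inter> G\<inverse> `` {b} \<times> G\<inverse> `` {b}))
      = (\<Sum>b\<in>V. \<Sum>q\<in>R. of_bool ((fst q, b) \<in> G \<and> (snd q, b) \<in> G))"
    using finR by simp
  also have "\<dots> = (\<Sum>q\<in>R. \<Sum>b\<in>V. of_bool ((fst q, b) \<in> G \<and> (snd q, b) \<in> G))"
    by (rule sum.swap)
  also have "\<dots> = (\<Sum>q\<in>R. card (G `` {fst q} \<inter> G `` {snd q}))"
  proof (intro sum.cong refl)
    fix q
    have "G `` {fst q} \<inter> G `` {snd q} = V \<inter> {b. (fst q, b) \<in> G \<and> (snd q, b) \<in> G}"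
      using assms(2) by auto
    then show "(\<Sum>b\<in>V. of_bool ((fst q, b) \<in> G \<and> (snd q, b) \<in> G)) = card (G `` {fst q} \<inter> G `` {snd q})"
      using assms(1) by simp
  qed
  finally show ?thesis
    by (simp add: case_prod_unfold)
qed

lemma subset_with_many_common_good_partners:
  fixes S :: "'a set" and Bad :: "('a \<times> 'a) set"
  assumes fin: "finite S" and few_bad: "8 * card (Bad \<inter> S \<times> S) \<le> card S ^ 2"
  shows "\<exists>V' \<subseteq> S. card S \<le> 2 * card V' \<and>
           (\<forall>a\<in>V'. \<forall>a'\<in>V'. card S \<le> 2 * card {a1 \<in> S. (a, a1) \<notin> Bad \<and> (a', a1) \<notin> Bad})"
proof -
  define s where "s = card S"
  define bad where "bad a = {a1 \<in> S. (a, a1) \<in> Bad}" for a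
  define V' where "V' = {a \<in> S. 4 * card (bad a) \<le> s}"
  have fin_bad: "finite (bad a)" for a
    using fin by (simp add: bad_def)
  have "Bad \<inter> S \<times> S = (SIGMA a:S. bad a)"
    by (auto simp: bad_def)
  then have sum_bad: "(\<Sum>a\<in>S. card (bad a)) = card (Bad \<inter> S \<times> S)"
    using fin fin_bad by simp
  have "card (S - V') * s \<le> (\<Sum>a\<in>S - V'. 4 * card (bad a))"
    by (intro sum_bounded_below[of _ s, simplified]) (auto simp: V'_def)
  also have "\<dots> \<le> (\<Sum>a\<in>S. 4 * card (bad a))"
    using fin by (intro sum_mono2) auto
  also have "\<dots> = 4 * card (Bad \<inter> S \<times> S)"
    by (simp add: sum_bad flip: sum_distrib_left)
  finally have "2 * (card (S - V') * s) \<le> s * s"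
    using few_bad unfolding s_def power2_eq_square by linarith
  then have "2 * card (S - V') \<le> s"
    using fin by (cases "s = 0") (auto simp: s_def mult.assoc[symmetric])
  moreover have "V' \<subseteq> S"
    by (auto simp: V'_def)
  then have "card (S - V') = s - card V'" and "card V' \<le> s"
    using fin by (auto simp: s_def card_Diff_subset finite_subset card_mono)
  ultimately have large: "s \<le> 2 * card V'"
    by linarith
  have "s \<le> 2 * card {a1 \<in> S. (a, a1) \<notin> Bad \<and> (a', a1) \<notin> Bad}" if "a \<in> V'" "a' \<in> V'" for a a'
  proof -
    have "S \<subseteq> {a1 \<in> S. (a, a1) \<notin> Bad \<and> (a', a1) \<notin> Bad} \<union> bad a \<union> bad a'"
      by (auto simp: bad_def)
    then have "s \<le> card ({a1 \<in> S. (a, a1) \<notin> Bad \<and> (a', a1) \<notin> Bad} \<union> bad a \<union> bad a')"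
      unfolding s_def using fin fin_bad by (intro card_mono) auto
    then have "s \<le> card {a1 \<in> S. (a, a1) \<notin> Bad \<and> (a', a1) \<notin> Bad} + card (bad a) + card (bad a')"
      using card_Un_le[of "{a1 \<in> S. (a, a1) \<notin> Bad \<and> (a', a1) \<notin> Bad} \<union> bad a" "bad a'"]
        card_Un_le[of "{a1 \<in> S. (a, a1) \<notin> Bad \<and> (a', a1) \<notin> Bad}" "bad a"] by linarith
    moreover have "4 * card (bad a) \<le> s" "4 * card (bad a') \<le> s"
      using that by (auto simp: V'_def)
    ultimately show ?thesis
      by linarith
  qed
  then show ?thesis
    using large by (auto simp: s_def V'_def intro!: exI[of _ V'])
qed

lemma exists_vertex_with_dense_neighbourhood:
  fixes V :: "'a set" and G :: "('a \<times> 'a) set" and \<alpha> :: real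
  assumes fin: "finite V" and ne: "V \<noteq> {}" and G: "G \<subseteq> V \<times> V" and \<alpha>: "\<alpha> > 0"
    and dense: "\<alpha> * card V ^ 2 \<le> card G"
  defines "Bad \<equiv> {(a, a') \<in> V \<times> V. card (G `` {a} \<inter> G `` {a'}) < \<alpha>\<^sup>2 / 16 * card V}"
  shows "\<exists>b\<in>V. \<alpha> * card V / 2 \<le> card (G\<inverse> `` {b}) \<and>
           8 * card (Bad \<inter> G\<inverse> `` {b} \<times> G\<inverse> `` {b}) \<le> card (G\<inverse> `` {b}) ^ 2"
proof -
  define m where "m = real (card V)"
  define deg where "deg b = real (card (G\<inverse> `` {b}))" for b
  define bad where "bad b = real (card (Bad \<inter> G\<inverse> `` {b} \<times> G\<inverse> `` {b}))" for b
  have m: "m > 0"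
    using fin ne by (simp add: m_def card_gt_0_iff)
  have "m * (\<alpha>\<^sup>2 * m ^ 3) = (\<alpha> * m\<^sup>2)\<^sup>2"
    by (simp add: power2_eq_square power3_eq_cube)
  also have "\<dots> \<le> (\<Sum>b\<in>V. deg b)\<^sup>2"
    using dense \<alpha> by (intro power_mono)
      (simp_all add: m_def deg_def card_eq_sum_card_converse_Image[OF fin G])
  also have "\<dots> \<le> m * (\<Sum>b\<in>V. (deg b)\<^sup>2)"
    using sum_squared_le_sum_of_squares[of deg V] by (simp add: m_def mult.commute)
  finally have sum_deg_sq: "\<alpha>\<^sup>2 * m ^ 3 \<le> (\<Sum>b\<in>V. (deg b)\<^sup>2)"
    using m by (rule mult_left_le_imp_le)
  have Bad_sub: "Bad \<subseteq> V \<times> V"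
    by (auto simp: Bad_def)
  have "(\<Sum>b\<in>V. bad b) = (\<Sum>q\<in>Bad. real (card (G `` {fst q} \<inter> G `` {snd q})))"
    using arg_cong[OF sum_card_pairs_in_converse_Image[OF fin G Bad_sub], of real]
    by (simp add: bad_def case_prod_unfold)
  also have "\<dots> \<le> (\<Sum>q\<in>Bad. \<alpha>\<^sup>2 / 16 * m)"
    by (intro sum_mono) (auto simp: Bad_def m_def)
  also have "\<dots> \<le> m\<^sup>2 * (\<alpha>\<^sup>2 / 16 * m)"
  proof -
    have "card Bad \<le> card (V \<times> V)"
      using fin Bad_sub by (intro card_mono) auto
    then have "real (card Bad) \<le> m\<^sup>2"
      by (simp add: m_def card_cartesian_product power2_eq_square flip: of_nat_mult)
    then show ?thesis
      using m by (simp add: mult_right_mono)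
  qed
  finally have sum_bad: "(\<Sum>b\<in>V. bad b) \<le> \<alpha>\<^sup>2 / 16 * m ^ 3"
    by (simp add: power2_eq_square power3_eq_cube mult_ac)
  have "(\<Sum>b\<in>V. (deg b)\<^sup>2 - 8 * bad b) = (\<Sum>b\<in>V. (deg b)\<^sup>2) - 8 * (\<Sum>b\<in>V. bad b)"
    by (simp add: sum_subtractf sum_distrib_left)
  moreover have "card V * (\<alpha>\<^sup>2 * m\<^sup>2 / 2) = \<alpha>\<^sup>2 * m ^ 3 / 2"
    by (simp add: m_def power2_eq_square power3_eq_cube)
  ultimately have "card V * (\<alpha>\<^sup>2 * m\<^sup>2 / 2) \<le> (\<Sum>b\<in>V. (deg b)\<^sup>2 - 8 * bad b)"
    using sum_deg_sq sum_bad by linarith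
  then obtain b where b: "b \<in> V" and good: "\<alpha>\<^sup>2 * m\<^sup>2 / 2 \<le> (deg b)\<^sup>2 - 8 * bad b"
    using sum_bounded_above_strict[of V "\<lambda>b. (deg b)\<^sup>2 - 8 * bad b" "\<alpha>\<^sup>2 * m\<^sup>2 / 2"] fin ne
    by (force simp: not_le card_gt_0_iff)
  have "bad b \<ge> 0"
    by (simp add: bad_def)
  moreover have "(\<alpha> * m / 2)\<^sup>2 = \<alpha>\<^sup>2 * m\<^sup>2 / 4" and nonneg: "\<alpha>\<^sup>2 * m\<^sup>2 \<ge> 0"
    by (simp_all add: power_mult_distrib power_divide)
  ultimately have "(\<alpha> * m / 2)\<^sup>2 \<le> (deg b)\<^sup>2"
    using good by linarith
  then have "\<alpha> * m / 2 \<le> deg b"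
    by (rule power2_le_imp_le) (simp add: deg_def)
  moreover have "8 * bad b \<le> (deg b)\<^sup>2"
    using good nonneg by linarith
  then have "8 * card (Bad \<inter> G\<inverse> `` {b} \<times> G\<inverse> `` {b}) \<le> card (G\<inverse> `` {b}) ^ 2"
    unfolding bad_def deg_def by (metis of_nat_le_iff of_nat_mult of_nat_numeral of_nat_power)
  ultimately show ?thesis
    using b by (auto simp: m_def deg_def)
qed

lemma dense_graph_well_connected_subset:
  fixes V :: "'a set" and G :: "('a \<times> 'a) set" and \<alpha> :: real
  assumes fin: "finite V" and ne: "V \<noteq> {}" and G: "G \<subseteq> V \<times> V" and \<alpha>: "\<alpha> > 0"
    and dense: "\<alpha> * card V ^ 2 \<le> card G"
  shows "\<exists>V' \<subseteq> V. \<alpha> * card V / 4 \<le> card V' \<and>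
           (\<forall>a\<in>V'. \<forall>a'\<in>V'. \<alpha> * card V / 4 \<le> card {a1 \<in> V. \<alpha>\<^sup>2 / 16 * card V \<le> card (G `` {a} \<inter> G `` {a1})
                                                 \<and> \<alpha>\<^sup>2 / 16 * card V \<le> card (G `` {a'} \<inter> G `` {a1})})"
proof -
  define Bad where "Bad = {(a, a') \<in> V \<times> V. card (G `` {a} \<inter> G `` {a'}) < \<alpha>\<^sup>2 / 16 * card V}"
  obtain b where "b \<in> V" and large: "\<alpha> * card V / 2 \<le> card (G\<inverse> `` {b})"
    and few_bad: "8 * card (Bad \<inter> G\<inverse> `` {b} \<times> G\<inverse> `` {b}) \<le> card (G\<inverse> `` {b}) ^ 2"
    using exists_vertex_with_dense_neighbourhood[OF assms] unfolding Bad_def by blast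
  define S where "S = G\<inverse> `` {b}"
  have SV: "S \<subseteq> V"
    using G by (auto simp: S_def)
  then have "finite S"
    using fin by (rule finite_subset)
  then obtain V' where V'S: "V' \<subseteq> S" and "card S \<le> 2 * card V'"
    and many_good: "\<And>a a'. a \<in> V' \<Longrightarrow> a' \<in> V' \<Longrightarrow> card S \<le> 2 * card {a1 \<in> S. (a, a1) \<notin> Bad \<and> (a', a1) \<notin> Bad}"
    using subset_with_many_common_good_partners[OF \<open>finite S\<close>, of Bad] few_bad unfolding S_def by auto
  then have "\<alpha> * card V / 4 \<le> card V'"
    using large unfolding S_def by linarith
  moreover have "\<alpha> * card V / 4 \<le> card {a1 \<in> V. \<alpha>\<^sup>2 / 16 * card V \<le> card (G `` {a} \<inter> G `` {a1})
                                                 \<and> \<alpha>\<^sup>2 / 16 * card V \<le> card (G `` {a'} \<inter> G `` {a1})}"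
    if "a \<in> V'" "a' \<in> V'" for a a'
  proof -
    have "{a1 \<in> S. (a, a1) \<notin> Bad \<and> (a', a1) \<notin> Bad} \<subseteq> {a1 \<in> V. \<alpha>\<^sup>2 / 16 * card V \<le> card (G `` {a} \<inter> G `` {a1})
                                                 \<and> \<alpha>\<^sup>2 / 16 * card V \<le> card (G `` {a'} \<inter> G `` {a1})}"
      using that SV V'S by (auto simp: Bad_def not_less)
    then have "card {a1 \<in> S. (a, a1) \<notin> Bad \<and> (a', a1) \<notin> Bad} \<le> card {a1 \<in> V. \<alpha>\<^sup>2 / 16 * card V \<le> card (G `` {a} \<inter> G `` {a1})
                                                 \<and> \<alpha>\<^sup>2 / 16 * card V \<le> card (G `` {a'} \<inter> G `` {a1})}"
      using fin by (intro card_mono) auto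
    then show ?thesis
      using many_good[OF that] large unfolding S_def by linarith
  qed
  ultimately show ?thesis
    using SV V'S by blast
qed

definition alternating_reps :: "'a::ab_group_add set \<Rightarrow> 'a \<Rightarrow> ('a \<times> 'a \<times> 'a \<times> 'a) set" where
  "alternating_reps P d = {(p1, p2, p3, p4) \<in> P \<times> P \<times> P \<times> P. p1 - p2 + p3 - p4 = d}"

lemma finite_alternating_reps [simp]: "finite P \<Longrightarrow> finite (alternating_reps P d)"
  by (rule finite_subset[of _ "P \<times> P \<times> P \<times> P"]) (auto simp: alternating_reps_def)

lemma card_alternating_reps_ge:
  fixes P :: "'a::ab_group_add set" and G :: "('a \<times> 'a) set" and k :: real
  assumes "finite P" and "finite G" and G: "G \<subseteq> {(a, b). a - b \<in> P}" and "finite A" and "k \<ge> 0"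
    and common: "\<And>a1. a1 \<in> A \<Longrightarrow> k \<le> card (G `` {a} \<inter> G `` {a1}) \<and> k \<le> card (G `` {a'} \<inter> G `` {a1})"
  shows "card A * k\<^sup>2 \<le> card (alternating_reps P (a - a'))"
proof -
  define T where "T = (SIGMA a1:A. (G `` {a} \<inter> G `` {a1}) \<times> (G `` {a'} \<inter> G `` {a1}))"
  define \<phi> where "\<phi> = (\<lambda>(a1, b1, b2). (a - b1, a1 - b1, a1 - b2, a' - b2))"
  have fin_nbrs: "finite (G `` {c})" for c
    using \<open>finite G\<close> by (rule finite_Image)
  have inj: "inj_on \<phi> T"
    by (auto simp: inj_on_def \<phi>_def T_def)
  have image: "\<phi> ` T \<subseteq> alternating_reps P (a - a')"
  proof
    fix q assume "q \<in> \<phi> ` T"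
    then obtain a1 b1 b2 where q: "q = (a - b1, a1 - b1, a1 - b2, a' - b2)"
      and edges: "(a, b1) \<in> G" "(a1, b1) \<in> G" "(a1, b2) \<in> G" "(a', b2) \<in> G"
      by (auto simp: \<phi>_def T_def)
    have "a - b1 \<in> P" "a1 - b1 \<in> P" "a1 - b2 \<in> P" "a' - b2 \<in> P"
      using edges G by auto
    then show "q \<in> alternating_reps P (a - a')"
      by (simp add: alternating_reps_def q algebra_simps)
  qed
  have "card A * k\<^sup>2 \<le> (\<Sum>a1\<in>A. real (card (G `` {a} \<inter> G `` {a1})) * real (card (G `` {a'} \<inter> G `` {a1})))"
    using sum_bounded_below[of A "k\<^sup>2"] common \<open>k \<ge> 0\<close>
    by (simp add: power2_eq_square mult_mono')
  also have "\<dots> = card T"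
    using \<open>finite A\<close> fin_nbrs by (simp add: T_def card_cartesian_product)
  also have "\<dots> = card (\<phi> ` T)"
    by (simp only: card_image[OF inj])
  also have "\<dots> \<le> card (alternating_reps P (a - a'))"
    using \<open>finite P\<close> image by (intro of_nat_mono card_mono) auto
  finally show ?thesis .
qed

lemma card_mult_le_card_of_disjoint_family:
  fixes L :: real
  assumes "finite Q" and "finite D" and "disjoint_family_on F D"
    and "\<And>d. d \<in> D \<Longrightarrow> F d \<subseteq> Q" and large: "\<And>d. d \<in> D \<Longrightarrow> L \<le> card (F d)"
  shows "card D * L \<le> card Q"
proof -
  have fin: "finite (F d)" if "d \<in> D" for d
    using assms that finite_subset by blast
  have "card D * L \<le> (\<Sum>d\<in>D. real (card (F d)))"
    using sum_bounded_below[of D L] large by simp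
  also have "\<dots> = card (\<Union>d\<in>D. F d)"
    using assms fin by (simp add: card_UN_disjoint disjoint_family_on_def)
  also have "\<dots> \<le> card Q"
    using assms by (intro of_nat_mono card_mono) auto
  finally show ?thesis .
qed

theorem balog_szemeredi_gowers:
  fixes V :: "'a::ab_group_add set" and \<eta> :: real
  assumes fin: "finite V" and ne: "V \<noteq> {}" and \<eta>: "\<eta> > 0"
    and energy: "\<eta> * card V ^ 3 \<le> card (additive_quadruples V)"
  shows "\<exists>V' \<subseteq> V. \<eta> * card V / 8 \<le> card V' \<and> card (diff_set V') \<le> 2 ^ 19 / \<eta> ^ 9 * card V"
proof -
  define m where "m = real (card V)"
  define P where "P = popular_diffs \<eta> V"
  define G where "G = {(a, b) \<in> V \<times> V. a - b \<in> P}"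
  have m: "m > 0"
    using fin ne by (simp add: m_def card_gt_0_iff)
  have finP: "finite P"
    using fin by (simp add: P_def popular_diffs_def)
  have GV: "G \<subseteq> V \<times> V"
    by (auto simp: G_def)
  then have finG: "finite G"
    using fin finite_subset by blast
  have "(\<eta> / 2) * card V ^ 2 \<le> card G"
    using card_pairs_with_popular_diff_ge[OF fin \<eta> energy] by (simp add: G_def P_def)
  then obtain V' where "V' \<subseteq> V" and large: "\<eta> / 2 * m / 4 \<le> card V'"
    and connected: "\<And>a a'. a \<in> V' \<Longrightarrow> a' \<in> V' \<Longrightarrow> \<eta> / 2 * m / 4 \<le> card {a1 \<in> V. (\<eta> / 2)\<^sup>2 / 16 * m \<le> card (G `` {a} \<inter> G `` {a1})
                                                 \<and> (\<eta> / 2)\<^sup>2 / 16 * m \<le> card (G `` {a'} \<inter> G `` {a1})}"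
    using dense_graph_well_connected_subset[OF fin ne GV, of "\<eta> / 2"] \<eta> unfolding m_def by auto
  define k where "k = (\<eta> / 2)\<^sup>2 / 16 * m"
  define L where "L = \<eta> / 2 * m / 4 * k\<^sup>2"
  have "L \<le> card (alternating_reps P d)" if "d \<in> diff_set V'" for d
  proof -
    obtain a a' where a: "a \<in> V'" "a' \<in> V'" and d: "d = a - a'"
      using \<open>d \<in> diff_set V'\<close> by (auto simp: diff_set_def)
    let ?A = "{a1 \<in> V. k \<le> card (G `` {a} \<inter> G `` {a1}) \<and> k \<le> card (G `` {a'} \<inter> G `` {a1})}"
    have "L \<le> card ?A * k\<^sup>2"
      using connected[OF a] unfolding L_def k_def by (intro mult_right_mono) auto
    also have "\<dots> \<le> card (alternating_reps P (a - a'))"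
      using fin m \<eta> by (intro card_alternating_reps_ge[OF finP finG]) (auto simp: G_def k_def)
    finally show ?thesis
      by (simp add: d)
  qed
  moreover have "finite V'"
    using \<open>V' \<subseteq> V\<close> fin by (rule finite_subset)
  ultimately have "card (diff_set V') * L \<le> card (P \<times> P \<times> P \<times> P)"
    using finP by (intro card_mult_le_card_of_disjoint_family[where F = "alternating_reps P"])
      (auto simp: alternating_reps_def disjoint_family_on_def)
  also have "\<dots> = real (card P) ^ 4"
    by (simp add: card_cartesian_product power4_eq_xxxx)
  also have "\<dots> \<le> (2 * m / \<eta>) ^ 4"
    using card_popular_diffs_le[OF fin ne \<eta>] by (intro power_mono) (simp_all add: P_def m_def)
  finally have "card (diff_set V') * L \<le> (2 * m / \<eta>) ^ 4" .
  also have "(2 * m / \<eta>) ^ 4 = (2 ^ 19 / \<eta> ^ 9 * m) * L"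
    using \<eta> m by (simp add: L_def k_def field_simps power_divide power_mult_distrib power2_eq_square) algebra
  finally have "card (diff_set V') * L \<le> (2 ^ 19 / \<eta> ^ 9 * m) * L" .
  moreover have "L > 0"
    using \<eta> m by (simp add: L_def k_def)
  ultimately have "card (diff_set V') \<le> 2 ^ 19 / \<eta> ^ 9 * m"
    by (rule mult_right_le_imp_le)
  then show ?thesis
    using \<open>V' \<subseteq> V\<close> large by (auto simp: m_def)
qed

lemma card_additive_quadruples_image:
  assumes inj: "inj_on f I"
  shows "card (additive_quadruples (f ` I)) = card {(a, b, c, d) \<in> I \<times> I \<times> I \<times> I. f a + f b = f c + f d}"
proof -
  define h where "h = map_prod f (map_prod f (map_prod f f))"
  have eq: "additive_quadruples (f ` I) = h ` {(a, b, c, d) \<in> I \<times> I \<times> I \<times> I. f a + f b = f c + f d}"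
  proof
    show "additive_quadruples (f ` I) \<subseteq> h ` {(a, b, c, d) \<in> I \<times> I \<times> I \<times> I. f a + f b = f c + f d}"
    proof
      fix q assume "q \<in> additive_quadruples (f ` I)"
      then obtain a b c d where "q = (f a, f b, f c, f d)" "a \<in> I" "b \<in> I" "c \<in> I" "d \<in> I"
        and "f a + f b = f c + f d"
        by (auto simp: additive_quadruples_def)
      then show "q \<in> h ` {(a, b, c, d) \<in> I \<times> I \<times> I \<times> I. f a + f b = f c + f d}"
        by (intro rev_image_eqI[of "(a, b, c, d)"]) (simp_all add: h_def)
    qed
  qed (auto simp: h_def additive_quadruples_def)
  have "inj_on h (I \<times> I \<times> I \<times> I)"
    unfolding h_def using inj by (intro map_prod_inj_on)
  then have "inj_on h {(a, b, c, d) \<in> I \<times> I \<times> I \<times> I. f a + f b = f c + f d}"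
    by (rule inj_on_subset) auto
  then show ?thesis
    unfolding eq by (rule card_image)
qed

lemma exists_dense_index_set_with_small_diff_set:
  fixes x :: "nat \<Rightarrow> nat" and r :: real
  assumes inj: "inj_on x {1..M}" and r: "r > 0" and M: "M \<ge> 1"
    and energy: "r * M ^ 3 \<le> add_energy x M"
  shows "\<exists>A \<subseteq> {1..M}. r * M / 8 \<le> card A \<and> card (diff_set ((\<lambda>i. int (x i)) ` A)) \<le> 2 ^ 19 / r ^ 9 * M"
proof -
  define f where "f i = int (x i)" for i
  have inj_f: "inj_on f {1..M}"
    by (rule inj_onI) (use inj in \<open>simp add: f_def inj_on_eq_iff\<close>)
  define V where "V = f ` {1..M}"
  have card_V: "card V = M"
    using inj_f by (simp add: V_def card_image)
  have "add_energy x M = card (additive_quadruples V)"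
    unfolding V_def card_additive_quadruples_image[OF inj_f] add_energy_def f_def
    by (intro arg_cong[where f = card]) auto
  then have "r * card V ^ 3 \<le> card (additive_quadruples V)"
    using energy by (simp add: card_V)
  then obtain V' where "V' \<subseteq> V" and large: "r * card V / 8 \<le> card V'"
    and small: "card (diff_set V') \<le> 2 ^ 19 / r ^ 9 * card V"
    using balog_szemeredi_gowers[of V r] M r by (auto simp: V_def)
  define A where "A = {i \<in> {1..M}. f i \<in> V'}"
  have "A \<subseteq> {1..M}"
    unfolding A_def by blast
  have img: "(\<lambda>i. int (x i)) ` A = V'"
    using \<open>V' \<subseteq> V\<close> unfolding A_def V_def f_def by blast
  have "card A = card V'"
    using card_image[OF inj_on_subset[OF inj_f \<open>A \<subseteq> {1..M}\<close>]] img by (simp add: f_def)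
  then show ?thesis
    using \<open>A \<subseteq> {1..M}\<close> img large small card_V by (intro exI[of _ A]) simp
qed

definition near_rationals :: "int set \<Rightarrow> real \<Rightarrow> nat \<Rightarrow> real set" where
  "near_rationals D \<delta> R = (\<Union>d\<in>D. \<Union>k\<in>{-(int R * \<bar>d\<bar> + 1)..int R * \<bar>d\<bar> + 1}.
      ball (of_int k / of_int d) (\<delta> / of_int \<bar>d\<bar>))"

lemma near_rationals_in_borel [measurable]: "near_rationals D \<delta> R \<in> sets borel"
  unfolding near_rationals_def by (intro borel_open open_UN ballI open_ball)

lemma emeasure_near_rationals_le:
  fixes \<delta> :: real
  assumes fin: "finite D" and nz: "0 \<notin> D" and \<delta>: "\<delta> \<ge> 0"
  shows "emeasure lborel (near_rationals D \<delta> R) \<le> ennreal (card D * (4 * real R + 6) * \<delta>)"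
proof -
  define K where "K d = {-(int R * \<bar>d\<bar> + 1)..int R * \<bar>d\<bar> + 1}" for d :: int
  define B where "B d = (\<Union>k\<in>K d. ball (of_int k / of_int d :: real) (\<delta> / of_int \<bar>d\<bar>))" for d
  have B_sets: "B d \<in> sets lborel" for d
    unfolding B_def sets_lborel by (intro borel_open open_UN ballI open_ball)
  have "emeasure lborel (B d) \<le> ennreal ((4 * real R + 6) * \<delta>)" if "d \<in> D" for d
  proof -
    have d: "real_of_int \<bar>d\<bar> \<ge> 1"
      using that nz by (cases "d = 0") auto
    have "real (card (K d)) * (2 * (\<delta> / \<bar>d\<bar>)) = 4 * real R * \<delta> + 6 * \<delta> / \<bar>d\<bar>"
      using d by (simp add: K_def field_simps)
    moreover have "6 * \<delta> / \<bar>d\<bar> \<le> 6 * \<delta>"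
      using divide_left_mono[of 1 "\<bar>d\<bar>" "6 * \<delta>"] d \<delta> by simp
    ultimately have bound: "real (card (K d)) * (2 * (\<delta> / \<bar>d\<bar>)) \<le> (4 * real R + 6) * \<delta>"
      by (simp add: distrib_right)
    have "emeasure lborel (B d) \<le> (\<Sum>k\<in>K d. emeasure lborel (ball (of_int k / of_int d :: real) (\<delta> / of_int \<bar>d\<bar>)))"
      unfolding B_def by (rule emeasure_subadditive_finite) (auto simp: K_def)
    also have "\<dots> = (\<Sum>k\<in>K d. ennreal (2 * (\<delta> / of_int \<bar>d\<bar>)))"
      using \<delta> by (simp add: ball_eq_greaterThanLessThan)
    also have "\<dots> = ennreal (card (K d) * (2 * (\<delta> / of_int \<bar>d\<bar>)))"
      using \<delta> by (subst sum_ennreal) simp_all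
    also have "\<dots> \<le> ennreal ((4 * real R + 6) * \<delta>)"
      using bound by (rule ennreal_leI)
    finally show ?thesis .
  qed
  note B_bound = this
  have "near_rationals D \<delta> R = (\<Union>d\<in>D. B d)"
    by (simp add: near_rationals_def B_def K_def)
  also have "emeasure lborel \<dots> \<le> (\<Sum>d\<in>D. emeasure lborel (B d))"
    using fin B_sets by (intro emeasure_subadditive_finite) auto
  also have "\<dots> \<le> (\<Sum>d\<in>D. ennreal ((4 * real R + 6) * \<delta>))"
    using B_bound by (rule sum_mono)
  also have "\<dots> = ennreal (card D * (4 * real R + 6) * \<delta>)"
    using \<delta> by (simp add: ennreal_of_nat_eq_real_of_nat ennreal_mult mult.assoc)
  finally show ?thesis .
qed

lemma mem_near_rationals:
  assumes "d \<in> D" and "d \<noteq> 0" and "\<bar>\<alpha>\<bar> \<le> R" and "\<delta> \<le> 1" and close: "dist_nearest_int (\<alpha> * d) < \<delta>"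
  shows "\<alpha> \<in> near_rationals D \<delta> R"
proof -
  have "bdd_below ((\<lambda>k::int. \<bar>\<alpha> * d - k\<bar>) ` UNIV)"
    by (rule bdd_belowI[of _ 0]) auto
  then obtain k :: int where k: "\<bar>\<alpha> * d - k\<bar> < \<delta>"
    using close unfolding dist_nearest_int_def by (auto simp: cINF_less_iff)
  have d: "real_of_int \<bar>d\<bar> \<ge> 1"
    using \<open>d \<noteq> 0\<close> by linarith
  have "\<bar>\<alpha> * d\<bar> \<le> R * \<bar>d\<bar>"
    using \<open>\<bar>\<alpha>\<bar> \<le> R\<close> by (simp add: abs_mult mult_right_mono)
  then have "\<bar>k\<bar> \<le> int R * \<bar>d\<bar> + 1"
    using k \<open>\<delta> \<le> 1\<close> by linarith
  then have k_range: "k \<in> {-(int R * \<bar>d\<bar> + 1)..int R * \<bar>d\<bar> + 1}"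
    by (simp add: abs_le_iff)
  have "dist \<alpha> (of_int k / of_int d) = \<bar>\<alpha> * d - k\<bar> / \<bar>d\<bar>"
    using \<open>d \<noteq> 0\<close> by (simp add: dist_real_def abs_divide [symmetric] diff_divide_distrib)
  then have "dist \<alpha> (of_int k / of_int d) < \<delta> / \<bar>d\<bar>"
    using k d by (simp add: divide_strict_right_mono)
  then have "\<alpha> \<in> ball (of_int k / of_int d) (\<delta> / of_int \<bar>d\<bar>)"
    by (simp add: dist_commute)
  then show ?thesis
    unfolding near_rationals_def using \<open>d \<in> D\<close> k_range by blast
qed

definition distinct_diffs :: "(nat \<Rightarrow> nat) \<Rightarrow> nat set \<Rightarrow> nat \<Rightarrow> int set" where
  "distinct_diffs x S A = {int (x i) - int (x j) | i j. i \<in> S \<and> j \<in> S \<and> i \<le> A \<and> j \<le> A \<and> i \<noteq> j}"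

lemma finite_distinct_diffs: "finite (distinct_diffs x S A)"
proof -
  have "distinct_diffs x S A \<subseteq> (\<lambda>(i, j). int (x i) - int (x j)) ` ({..A} \<times> {..A})"
    by (auto simp: distinct_diffs_def)
  then show ?thesis
    by (rule finite_subset) simp
qed

lemma zero_notin_distinct_diffs: "inj_on x S \<Longrightarrow> 0 \<notin> distinct_diffs x S A"
  by (auto simp: distinct_diffs_def dest: inj_onD)

lemma strict_mono_on_enumerate_pred:
  fixes S :: "nat set"
  assumes "infinite S"
  shows "strict_mono_on {1..} (\<lambda>k. enumerate S (k - 1))"
  by (rule strict_mono_onI) (use assms in \<open>simp add: diff_less_mono\<close>)

lemma filterlim_enumerate_pred:
  fixes S :: "nat set"
  assumes "infinite S"
  shows "filterlim (\<lambda>k. enumerate S (k - 1)) at_top sequentially"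
proof -
  have "Z \<le> enumerate S (k - 1)" if "Z + 1 \<le> k" for Z k :: nat
    using le_enumerate[OF assms, of "k - 1"] that by linarith
  then show ?thesis
    unfolding filterlim_at_top eventually_sequentially by blast
qed

lemma card_enumerate_pred_le_eq:
  fixes S :: "nat set"
  assumes S: "infinite S"
  shows "card {k. 1 \<le> k \<and> enumerate S (k - 1) \<le> A} = card (S \<inter> {..A})"
proof -
  have "{k. 1 \<le> k \<and> enumerate S (k - 1) \<le> A} = Suc ` {i. enumerate S i \<le> A}"
    by (auto simp: image_iff intro!: exI[of _ "_ - 1"])
  then have "card {k. 1 \<le> k \<and> enumerate S (k - 1) \<le> A} = card {i. enumerate S i \<le> A}"
    by (simp add: card_image)
  also have "\<dots> = card (enumerate S ` {i. enumerate S i \<le> A})"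
    using inj_enumerate[OF S] by (simp add: card_image inj_on_subset)
  also have "enumerate S ` {i. enumerate S i \<le> A} = S \<inter> {..A}"
    using bij_enumerate[OF S] by (auto simp: bij_betw_def)
  finally show ?thesis .
qed

lemma delta_min_ge_if_not_near_rationals:
  fixes x :: "nat \<Rightarrow> nat" and S :: "nat set"
  assumes S: "infinite S" and inj: "inj_on x S" and "\<delta> \<le> 1" and "\<bar>\<alpha>\<bar> \<le> R"
    and A: "enumerate S 1 \<le> A" and far: "\<alpha> \<notin> near_rationals (distinct_diffs x S A) \<delta> R"
  shows "\<delta> \<le> delta_min \<alpha> x (\<lambda>k. enumerate S (k - 1)) A"
proof -
  define n where "n = (\<lambda>k. enumerate S (k - 1))"
  define g where "g = (\<lambda>(k, l). dist_nearest_int (\<alpha> * real (x (n k)) - \<alpha> * real (x (n l))))"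
  define P where "P = {(k, l). 1 \<le> k \<and> 1 \<le> l \<and> k \<noteq> l \<and> n k \<le> A \<and> n l \<le> A}"
  have gaps: "{dist_nearest_int (\<alpha> * real (x (n k)) - \<alpha> * real (x (n l))) | k l.
                 1 \<le> k \<and> 1 \<le> l \<and> k \<noteq> l \<and> n k \<le> A \<and> n l \<le> A} = g ` P"
    by (auto simp: g_def P_def)
  have "k \<le> A + 1" if "n k \<le> A" for k
    using le_enumerate[OF S, of "k - 1"] that by (simp add: n_def)
  then have "P \<subseteq> {..A + 1} \<times> {..A + 1}"
    by (auto simp: P_def)
  then have "finite P"
    by (rule finite_subset) simp
  moreover have "(1, 2) \<in> P"
    using A enumerate_step[OF S, of 0] by (simp add: P_def n_def)
  moreover have "\<delta> \<le> g q" if "q \<in> P" for q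
  proof (rule ccontr)
    assume close: "\<not> \<delta> \<le> g q"
    obtain k l where q: "q = (k, l)" and kl: "1 \<le> k" "1 \<le> l" "k \<noteq> l" "n k \<le> A" "n l \<le> A"
      using \<open>q \<in> P\<close> by (auto simp: P_def)
    define d where "d = int (x (n k)) - int (x (n l))"
    have "n k \<in> S" "n l \<in> S" "n k \<noteq> n l"
      using kl S by (simp_all add: n_def enumerate_in_set inj_enumerate[THEN inj_eq])
    then have "d \<in> distinct_diffs x S A" and "d \<noteq> 0"
      using kl inj by (auto simp: d_def distinct_diffs_def dest: inj_onD)
    moreover have "dist_nearest_int (\<alpha> * d) < \<delta>"
      using close by (simp add: q g_def d_def algebra_simps)
    ultimately show False
      using mem_near_rationals \<open>\<delta> \<le> 1\<close> \<open>\<bar>\<alpha>\<bar> \<le> R\<close> far by blast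
  qed
  ultimately show ?thesis
    unfolding n_def[symmetric] delta_min_def gaps by (subst Min_ge_iff) auto
qed

lemma AE_eventually_delta_min_ge:
  fixes x :: "nat \<Rightarrow> nat" and S :: "nat set" and A :: "nat \<Rightarrow> nat" and \<delta> :: "nat \<Rightarrow> real"
  assumes S: "infinite S" and inj: "inj_on x S" and A: "filterlim A at_top sequentially"
    and \<delta>_pos: "\<And>N. 0 < \<delta> N" and \<delta>_le: "\<And>N. \<delta> N \<le> 1"
    and summable: "summable (\<lambda>N. card (distinct_diffs x S (A N)) * \<delta> N)"
  shows "AE \<alpha> in lborel. \<forall>\<^sub>F N in sequentially. \<delta> N \<le> delta_min \<alpha> x (\<lambda>k. enumerate S (k - 1)) (A N)"
proof -
  define U where "U R N = near_rationals (distinct_diffs x S (A N)) (\<delta> N) R" for R N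
  have emeasure_U: "emeasure lborel (U R N) \<le> ennreal ((4 * real R + 6) * (card (distinct_diffs x S (A N)) * \<delta> N))" for R N
    using emeasure_near_rationals_le[of "distinct_diffs x S (A N)" "\<delta> N" R] finite_distinct_diffs
      zero_notin_distinct_diffs[OF inj] \<delta>_pos[of N]
    by (simp add: U_def mult_ac)
  have "AE \<alpha> in lborel. \<forall>\<^sub>F N in sequentially. \<alpha> \<in> space lborel - U R N" for R
  proof (rule borel_cantelli_AE1)
    show "U R N \<in> sets lborel" for N
      by (simp add: U_def near_rationals_in_borel)
    show "emeasure lborel (U R N) < \<infinity>" for N
      using emeasure_U[of R N] by (simp add: le_less_trans)
    show "summable (\<lambda>N. measure lborel (U R N))"
    proof (rule summable_comparison_test')
      show "summable (\<lambda>N. (4 * real R + 6) * (card (distinct_diffs x S (A N)) * \<delta> N))"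
        using summable by (rule summable_mult)
      show "norm (measure lborel (U R N)) \<le> (4 * real R + 6) * (card (distinct_diffs x S (A N)) * \<delta> N)" for N
        using emeasure_U[of R N] \<delta>_pos[of N] unfolding measure_def by (simp add: enn2real_leI)
    qed
  qed
  then have "AE \<alpha> in lborel. \<forall>R::nat. \<forall>\<^sub>F N in sequentially. \<alpha> \<notin> U R N"
    by (subst AE_all_countable) auto
  then show ?thesis
  proof (rule AE_mp, intro AE_I2 impI)
    fix \<alpha> :: real
    assume far: "\<forall>R::nat. \<forall>\<^sub>F N in sequentially. \<alpha> \<notin> U R N"
    define R where "R = nat \<lceil>\<bar>\<alpha>\<bar>\<rceil>"
    have "\<bar>\<alpha>\<bar> \<le> R"
      unfolding R_def by linarith
    have "\<forall>\<^sub>F N in sequentially. enumerate S 1 \<le> A N"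
      using A by (simp add: filterlim_at_top)
    with far[rule_format, of R] show "\<forall>\<^sub>F N in sequentially. \<delta> N \<le> delta_min \<alpha> x (\<lambda>k. enumerate S (k - 1)) (A N)"
    proof eventually_elim
      case (elim N)
      then show ?case
        using delta_min_ge_if_not_near_rationals[OF S inj \<delta>_le \<open>\<bar>\<alpha>\<bar> \<le> R\<close>] by (simp add: U_def)
    qed
  qed
qed

primrec fast_seq :: "real \<Rightarrow> nat \<Rightarrow> nat" where
  "fast_seq K 0 = 0"
| "fast_seq K (Suc N) = nat \<lceil>exp (real (Suc N) ^ 2 * K * (1 + real (fast_seq K N)))\<rceil>"

lemma fast_seq_growth:
  assumes K: "K \<ge> 1"
  shows ln_fast_seq_Suc_ge: "real (Suc N) ^ 2 * K * (1 + real (fast_seq K N)) \<le> ln (fast_seq K (Suc N))"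
    and fast_seq_Suc_ge: "K * (1 + real (fast_seq K N)) \<le> fast_seq K (Suc N)"
proof -
  define y where "y = real (Suc N) ^ 2 * K * (1 + real (fast_seq K N))"
  have y: "exp y \<le> fast_seq K (Suc N)"
    unfolding y_def by simp
  then show "real (Suc N) ^ 2 * K * (1 + real (fast_seq K N)) \<le> ln (fast_seq K (Suc N))"
    using exp_gt_zero[of y] unfolding y_def by (simp add: ln_ge_iff)
  have "1 * (K * (1 + real (fast_seq K N))) \<le> real (Suc N) ^ 2 * (K * (1 + real (fast_seq K N)))"
    using K by (intro mult_right_mono) auto
  then have "K * (1 + real (fast_seq K N)) \<le> y"
    by (simp add: y_def mult.assoc)
  then show "K * (1 + real (fast_seq K N)) \<le> fast_seq K (Suc N)"
    using y exp_ge_add_one_self[of y] by linarith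
qed

lemma strict_mono_fast_seq:
  assumes "K \<ge> 1"
  shows "strict_mono (fast_seq K)"
  unfolding strict_mono_Suc_iff
proof
  fix N
  have "real (fast_seq K N) < 1 * (1 + real (fast_seq K N))"
    by simp
  also have "\<dots> \<le> K * (1 + real (fast_seq K N))"
    using assms by (intro mult_right_mono) auto
  also have "\<dots> \<le> fast_seq K (Suc N)"
    using assms by (rule fast_seq_Suc_ge)
  finally show "fast_seq K N < fast_seq K (Suc N)"
    by simp
qed

definition block_union :: "(nat \<Rightarrow> nat) \<Rightarrow> (nat \<Rightarrow> nat set) \<Rightarrow> nat set" where
  "block_union b B = (\<Union>N. B (b (Suc N)) \<inter> {b N<..b (Suc N)})"

lemma zero_notin_block_union: "0 \<notin> block_union b B"
  by (auto simp: block_union_def)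

lemma block_union_upto_subset:
  assumes b: "strict_mono b"
  shows "block_union b B \<inter> {..b (Suc N)} \<subseteq> {..b N} \<union> B (b (Suc N))"
proof
  fix i assume "i \<in> block_union b B \<inter> {..b (Suc N)}"
  then obtain M where i: "i \<in> B (b (Suc M))" "b M < i" "i \<le> b (Suc M)" "i \<le> b (Suc N)"
    by (auto simp: block_union_def)
  show "i \<in> {..b N} \<union> B (b (Suc N))"
  proof (cases "i \<le> b N")
    case False
    have "\<not> M < N"
      using i False strict_mono_less_eq[OF b, of "Suc M" N] by auto
    moreover have "\<not> N < M"
      using i strict_mono_less_eq[OF b, of "Suc N" M] by auto
    ultimately show ?thesis
      using i by (simp add: nat_neq_iff[symmetric])
  qed simp
qed

lemma card_block_union_upto_ge:
  assumes "B (b (Suc N)) \<subseteq> {1..b (Suc N)}"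
  shows "card (B (b (Suc N))) \<le> card (block_union b B \<inter> {..b (Suc N)}) + b N"
proof -
  have "B (b (Suc N)) \<inter> {b N<..b (Suc N)} \<subseteq> block_union b B"
    unfolding block_union_def by blast
  then have "B (b (Suc N)) \<subseteq> (block_union b B \<inter> {..b (Suc N)}) \<union> {1..b N}"
    using assms by fastforce
  then have "card (B (b (Suc N))) \<le> card ((block_union b B \<inter> {..b (Suc N)}) \<union> {1..b N})"
    by (intro card_mono) auto
  also have "\<dots> \<le> card (block_union b B \<inter> {..b (Suc N)}) + card {1..b N}"
    by (rule card_Un_le)
  finally show ?thesis
    by simp
qed

lemma card_distinct_diffs_block_union_le:
  assumes b: "strict_mono b" and fin: "finite (B (b (Suc N)))"
  shows "card (distinct_diffs x (block_union b B) (b (Suc N)))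
           \<le> card (diff_set ((\<lambda>i. int (x i)) ` B (b (Suc N)))) + 2 * b N * b (Suc N)"
proof -
  define T where "T = b (Suc N)"
  define f where "f = (\<lambda>(i, j). int (x i) - int (x j))"
  define Pr where "Pr = ({1..b N} \<times> {1..T}) \<union> ({1..T} \<times> {1..b N})"
  have "distinct_diffs x (block_union b B) T \<subseteq> diff_set ((\<lambda>i. int (x i)) ` B T) \<union> f ` Pr"
  proof
    fix z assume "z \<in> distinct_diffs x (block_union b B) T"
    then obtain i j where z: "z = int (x i) - int (x j)"
      and ij: "i \<in> block_union b B" "j \<in> block_union b B" "i \<le> T" "j \<le> T"
      by (auto simp: distinct_diffs_def)
    have "i \<noteq> 0" "j \<noteq> 0"
      using ij zero_notin_block_union by metis+
    moreover have "i \<le> b N \<or> i \<in> B T" "j \<le> b N \<or> j \<in> B T"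
      using ij block_union_upto_subset[OF b, of B N] by (auto simp: T_def)
    ultimately show "z \<in> diff_set ((\<lambda>i. int (x i)) ` B T) \<union> f ` Pr"
      using ij z by (auto simp: diff_set_def f_def Pr_def)
  qed
  then have "card (distinct_diffs x (block_union b B) T) \<le> card (diff_set ((\<lambda>i. int (x i)) ` B T) \<union> f ` Pr)"
    using fin by (intro card_mono) (auto simp: Pr_def T_def)
  also have "\<dots> \<le> card (diff_set ((\<lambda>i. int (x i)) ` B T)) + card Pr"
    using card_Un_le[of "diff_set ((\<lambda>i. int (x i)) ` B T)" "f ` Pr"] card_image_le[of Pr f]
    by (simp add: Pr_def)
  also have "card Pr \<le> 2 * b N * T"
    using card_Un_le[of "{1..b N} \<times> {1..T}" "{1..T} \<times> {1..b N}"]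
    by (simp add: Pr_def card_cartesian_product mult.commute)
  finally show ?thesis
    by (simp add: T_def)
qed

lemma exists_sparse_set_with_few_diffs:
  fixes x :: "nat \<Rightarrow> nat" and c K :: real and Af :: "nat \<Rightarrow> nat set"
  assumes c: "c > 0"
    and Af: "\<And>M. M \<ge> 1 \<Longrightarrow> Af M \<subseteq> {1..M} \<and> c * M \<le> card (Af M)
                               \<and> card (diff_set ((\<lambda>i. int (x i)) ` Af M)) \<le> K * M"
  shows "\<exists>S b. infinite S \<and> 0 \<notin> S \<and> strict_mono b \<and>
           (\<forall>N. c / 2 * b (Suc N) \<le> card (S \<inter> {..b (Suc N)})) \<and> (\<forall>N. 1 \<le> ln (b (Suc N))) \<and>
           (\<forall>N. real (Suc N) ^ 2 * card (distinct_diffs x S (b (Suc N))) \<le> b (Suc N) * ln (b (Suc N)))"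
proof -
  define K' where "K' = max 2 (max K (2 / c))"
  define b where "b = fast_seq K'"
  define S where "S = block_union b Af"
  have K': "K' \<ge> 1" "K \<le> K'" "2 / c \<le> K'" "2 \<le> K'"
    by (auto simp: K'_def)
  have b: "strict_mono b"
    using K' by (simp add: b_def strict_mono_fast_seq)
  have ln_b: "real (Suc N) ^ 2 * K' * (1 + b N) \<le> ln (b (Suc N))" for N
    using ln_fast_seq_Suc_ge[OF K'(1)] by (simp add: b_def)
  have b_big: "K' * (1 + b N) \<le> b (Suc N)" for N
    using fast_seq_Suc_ge[OF K'(1)] by (simp add: b_def)
  have ln1: "1 \<le> ln (b (Suc N))" for N
  proof -
    have "1 * 1 * 1 \<le> real (Suc N) ^ 2 * K' * (1 + b N)"
      using K' by (intro mult_mono) auto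
    then show ?thesis
      using ln_b[of N] by linarith
  qed
  have B1: "1 \<le> b (Suc N)" for N
    using strict_monoD[OF b, of 0 "Suc N"] by simp
  have dense: "c / 2 * b (Suc N) \<le> card (S \<inter> {..b (Suc N)})" for N
  proof -
    have "c * b (Suc N) \<le> card (Af (b (Suc N)))" and sub: "Af (b (Suc N)) \<subseteq> {1..b (Suc N)}"
      using Af[OF B1] by auto
    moreover have "real (card (Af (b (Suc N)))) \<le> card (S \<inter> {..b (Suc N)}) + real (b N)"
      using card_block_union_upto_ge[where B = Af and b = b and N = N, OF sub] unfolding S_def by (simp only: of_nat_add[symmetric] of_nat_le_iff)
    moreover have "2 / c * (1 + b N) \<le> K' * (1 + b N)"
      using K' by (intro mult_right_mono) auto
    then have "2 / c * (1 + b N) \<le> b (Suc N)"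
      using b_big[of N] by linarith
    then have "2 * (1 + real (b N)) \<le> c * b (Suc N)"
      using c by (simp add: field_simps)
    ultimately show ?thesis
      by argo
  qed
  have few: "real (Suc N) ^ 2 * card (distinct_diffs x S (b (Suc N))) \<le> b (Suc N) * ln (b (Suc N))" for N
  proof -
    have sub: "Af (b (Suc N)) \<subseteq> {1..b (Suc N)}" and "card (diff_set ((\<lambda>i. int (x i)) ` Af (b (Suc N)))) \<le> K * b (Suc N)"
      using Af[OF B1] by auto
    moreover have "finite (Af (b (Suc N)))"
      using sub by (rule finite_subset) simp
    ultimately have "card (distinct_diffs x S (b (Suc N))) \<le> K * b (Suc N) + 2 * b N * b (Suc N)"
      using card_distinct_diffs_block_union_le[OF b, of Af N x] unfolding S_def by linarith
    also have "\<dots> \<le> K' * (1 + b N) * b (Suc N)"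
    proof -
      have "K * b (Suc N) \<le> K' * b (Suc N)" and "2 * real (b N) * b (Suc N) \<le> K' * b N * b (Suc N)"
        using K' by (intro mult_right_mono; simp)+
      then show ?thesis
        by (simp add: algebra_simps)
    qed
    finally have "real (Suc N) ^ 2 * card (distinct_diffs x S (b (Suc N))) \<le> real (Suc N) ^ 2 * K' * (1 + b N) * b (Suc N)"
      by (simp add: mult.assoc mult_left_mono)
    also have "\<dots> \<le> ln (b (Suc N)) * b (Suc N)"
      using ln_b[of N] by (intro mult_right_mono) auto
    finally show ?thesis
      by (simp add: mult.commute)
  qed
  have "infinite S"
  proof
    assume "finite S"
    obtain N where N: "card S < c / 2 * real N"
      using reals_Archimedean2[of "card S / (c / 2)"] c by (auto simp: field_simps)
    have "c / 2 * real N \<le> c / 2 * b (Suc N)"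
      using seq_suble[OF b, of "Suc N"] c by (intro mult_left_mono) auto
    also have "\<dots> \<le> card (S \<inter> {..b (Suc N)})"
      by (rule dense)
    also have "\<dots> \<le> card S"
      using \<open>finite S\<close> by (intro of_nat_mono card_mono) auto
    finally show False
      using N by linarith
  qed
  then show ?thesis
    using zero_notin_block_union b dense ln1 few unfolding S_def by blast
qed

lemma gap_scale_bounds:
  fixes B D n \<epsilon> :: real
  assumes B: "1 \<le> B" and L: "1 \<le> ln B" and \<epsilon>: "\<epsilon> > 0" and n: "n > 0"
    and "0 \<le> D" and D: "n ^ 2 * D \<le> B * ln B"
  shows "0 < 1 / (B * ln B powr (1 + \<epsilon>))" and "1 / (B * ln B powr (1 + \<epsilon>)) \<le> 1"
    and "D * (1 / (B * ln B powr (1 + \<epsilon>))) \<le> 1 / n ^ 2"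
proof -
  have "ln B = ln B powr 1"
    using L by simp
  also have "\<dots> \<le> ln B powr (1 + \<epsilon>)"
    using L \<epsilon> by (intro powr_mono) auto
  finally have scale: "B * ln B \<le> B * ln B powr (1 + \<epsilon>)"
    using B by (intro mult_left_mono) auto
  moreover have "1 \<le> B * ln B"
    using B L by (metis mult_mono' mult_1 zero_le_one)
  ultimately show "0 < 1 / (B * ln B powr (1 + \<epsilon>))" and "1 / (B * ln B powr (1 + \<epsilon>)) \<le> 1"
    by auto
  have "D \<le> B * ln B / n ^ 2"
    using D n by (simp add: field_simps)
  then have "D / (B * ln B powr (1 + \<epsilon>)) \<le> (B * ln B / n ^ 2) / (B * ln B)"
    using scale \<open>1 \<le> B * ln B\<close> \<open>0 \<le> D\<close> by (intro frac_le) auto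
  moreover have "(B * ln B / n ^ 2) / (B * ln B) = 1 / n ^ 2"
  proof -
    have "B \<noteq> 0" "ln B \<noteq> 0"
      using B L by auto
    then show ?thesis
      by simp
  qed
  ultimately show "D * (1 / (B * ln B powr (1 + \<epsilon>))) \<le> 1 / n ^ 2"
    by simp
qed

lemma AE_delta_min_ge_gap_scale:
  fixes x :: "nat \<Rightarrow> nat" and S :: "nat set" and b :: "nat \<Rightarrow> nat" and \<epsilon> :: real
  assumes S: "infinite S" and inj: "inj_on x S" and b: "strict_mono b" and \<epsilon>: "\<epsilon> > 0"
    and ln1: "\<And>N. 1 \<le> ln (b (Suc N))"
    and few: "\<And>N. real (Suc N) ^ 2 * card (distinct_diffs x S (b (Suc N))) \<le> b (Suc N) * ln (b (Suc N))"
  shows "AE \<alpha> in lborel. \<exists>C>0. \<forall>\<^sub>F N in sequentially.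
           C / (real (b N) * ln (real (b N)) powr (1 + \<epsilon>)) \<le> delta_min \<alpha> x (\<lambda>k. enumerate S (k - 1)) (b N)"
proof -
  define \<delta> where "\<delta> N = 1 / (real (b (Suc N)) * ln (real (b (Suc N))) powr (1 + \<epsilon>))" for N
  have B1: "1 \<le> real (b (Suc N))" for N
    using strict_monoD[OF b, of 0 "Suc N"] by simp
  note bounds = gap_scale_bounds[OF B1 ln1 \<epsilon> _ _ few, folded \<delta>_def]
  have "AE \<alpha> in lborel. \<forall>\<^sub>F N in sequentially. \<delta> N \<le> delta_min \<alpha> x (\<lambda>k. enumerate S (k - 1)) (b (Suc N))"
  proof (rule AE_eventually_delta_min_ge[OF S inj])
    have "strict_mono (\<lambda>N. b (Suc N))"
      using b by (simp add: strict_mono_def)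
    then show "filterlim (\<lambda>N. b (Suc N)) at_top sequentially"
      by (rule filterlim_subseq)
    show "0 < \<delta> N" "\<delta> N \<le> 1" for N
      using bounds by auto
    have "summable (\<lambda>N. inverse (real N ^ 2))"
      by (rule inverse_power_summable) simp
    then have "summable (\<lambda>N. inverse (real (Suc N) ^ 2))"
      by (subst summable_Suc_iff)
    then show "summable (\<lambda>N. card (distinct_diffs x S (b (Suc N))) * \<delta> N)"
    proof (rule summable_comparison_test'[where N = 0])
      show "norm (card (distinct_diffs x S (b (Suc N))) * \<delta> N) \<le> inverse (real (Suc N) ^ 2)" for N
        using bounds(1,3)[of N] by (simp add: inverse_eq_divide abs_of_nonneg del: of_nat_Suc)
    qed
  qed
  then show ?thesis
  proof (rule eventually_mono)
    fix \<alpha> :: real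
    assume "\<forall>\<^sub>F N in sequentially. \<delta> N \<le> delta_min \<alpha> x (\<lambda>k. enumerate S (k - 1)) (b (Suc N))"
    then have "\<forall>\<^sub>F N in sequentially. 1 / (real (b N) * ln (real (b N)) powr (1 + \<epsilon>))
                 \<le> delta_min \<alpha> x (\<lambda>k. enumerate S (k - 1)) (b N)"
      unfolding \<delta>_def by (subst eventually_sequentially_Suc[symmetric])
    then show "\<exists>C>0. \<forall>\<^sub>F N in sequentially.
                 C / (real (b N) * ln (real (b N)) powr (1 + \<epsilon>)) \<le> delta_min \<alpha> x (\<lambda>k. enumerate S (k - 1)) (b N)"
      by (intro exI[of _ 1]) simp
  qed
qed

theorem theorem9:
  fixes x :: "nat \<Rightarrow> nat" and r :: real
  assumes pos: "\<forall>n\<ge>1. x n > 0"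
    and incr: "strict_mono_on {1..} x"
    and r_pos: "r > 0"
    and energy: "\<forall>N. real (add_energy x N) \<ge> r * real N ^ 3"
  shows "\<exists>n a :: nat \<Rightarrow> nat.
           strict_mono_on {1..} n \<and> (\<forall>k\<ge>1. n k > 0) \<and> filterlim n at_top sequentially \<and>
           strict_mono_on {1..} a \<and> (\<forall>N\<ge>1. a N > 0) \<and> filterlim a at_top sequentially \<and>
           (\<exists>c>0. \<forall>N\<ge>1. real (card {k. 1 \<le> k \<and> n k \<le> a N}) \<ge> c * real (a N)) \<and>
           (\<forall>\<epsilon>>0. AE \<alpha> in lborel. \<exists>C>0. \<forall>\<^sub>F N in sequentially.
              delta_min \<alpha> x n (a N) \<ge> C / (real (a N) * ln (real (a N)) powr (1 + \<epsilon>)))"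
proof -
  have inj: "inj_on x {1..}"
    using incr by (rule strict_mono_on_imp_inj_on)
  have "\<exists>A. M \<ge> 1 \<longrightarrow> A \<subseteq> {1..M} \<and> r / 8 * M \<le> card A \<and> card (diff_set ((\<lambda>i. int (x i)) ` A)) \<le> 2 ^ 19 / r ^ 9 * M" for M
    using exists_dense_index_set_with_small_diff_set[OF inj_on_subset[OF inj] r_pos, of M] energy by auto
  then obtain Af where Af: "\<And>M. M \<ge> 1 \<Longrightarrow> Af M \<subseteq> {1..M} \<and> r / 8 * M \<le> card (Af M) \<and>
                          card (diff_set ((\<lambda>i. int (x i)) ` Af M)) \<le> 2 ^ 19 / r ^ 9 * M"
    by metis
  obtain S b where S: "infinite S" "0 \<notin> S" and b: "strict_mono b"
    and dense: "\<And>N. r / 8 / 2 * b (Suc N) \<le> card (S \<inter> {..b (Suc N)})"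
    and ln1: "\<And>N. 1 \<le> ln (b (Suc N))"
    and few: "\<And>N. real (Suc N) ^ 2 * card (distinct_diffs x S (b (Suc N))) \<le> b (Suc N) * ln (b (Suc N))"
    using exists_sparse_set_with_few_diffs[OF _ Af] r_pos by auto
  have "inj_on x S"
    using inj by (rule inj_on_subset) (use S(2) in \<open>auto simp: Suc_le_eq intro: gr0I\<close>)
  have density: "r / 16 * b N \<le> card {k. 1 \<le> k \<and> enumerate S (k - 1) \<le> b N}" if N: "N \<ge> 1" for N
  proof -
    obtain N' where "N = Suc N'"
      by (cases N) (use N in auto)
    then show ?thesis
      using dense[of N'] card_enumerate_pred_le_eq[OF S(1), of "b N"] by simp
  qed
  have "\<forall>k\<ge>1. enumerate S (k - 1) > 0"
    using enumerate_in_set[OF S(1)] S(2) by (metis gr0I)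
  moreover have "\<forall>N\<ge>1. b N > 0"
  proof (intro allI impI)
    fix N :: nat
    assume "N \<ge> 1"
    then show "b N > 0"
      using strict_monoD[OF b, of 0 N] by simp
  qed
  moreover have "strict_mono_on {1..} b"
    using b by (simp add: strict_mono_def strict_mono_on_def)
  moreover have "\<exists>c>0. \<forall>N\<ge>1. real (card {k. 1 \<le> k \<and> enumerate S (k - 1) \<le> b N}) \<ge> c * real (b N)"
    using density r_pos by (intro exI[of _ "r / 16"]) simp
  moreover have "\<forall>\<epsilon>>0. AE \<alpha> in lborel. \<exists>C>0. \<forall>\<^sub>F N in sequentially.
      delta_min \<alpha> x (\<lambda>k. enumerate S (k - 1)) (b N) \<ge> C / (real (b N) * ln (real (b N)) powr (1 + \<epsilon>))"
    using AE_delta_min_ge_gap_scale[OF S(1) \<open>inj_on x S\<close> b _ ln1 few] by blast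
  ultimately show ?thesis
    using strict_mono_on_enumerate_pred[OF S(1)] filterlim_enumerate_pred[OF S(1)] filterlim_subseq[OF b]
    by (intro exI[of _ "\<lambda>k. enumerate S (k - 1)"] exI[of _ b]) simp
qed

end
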